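(* Let $(S,K,I)$ be an active split graph such that $\Phi=\Phi(S)$ is simple and connected. Then exactly one of the following holds: (1) $\Phi$ is complete and $|K|=|I|$; (2) $|K|=\omega(\Phi)<|I|$, and every vertex of $\Phi$ belongs to some maximum clique of $\Phi$; in particular $|K|\le 1+\min\{\deg_{\Phi}(v): v\in I\}$.
   Context: All graphs are finite and simple. A split graph is a graph $S$ whose vertex set is a disjoint union $V(S)=K\,\dot\cup\,I$ with $K$ a clique and $I$ an independent set; $(K,I)$ is called a bipartition of $S$, and $(S,K,I)$ denotes $S$ together with this fixed bipartition. A 2-switch in a graph $G$ is performed on four distinct vertices $a,b,c,d$ with $ab,cd\in E(G)$ and $ac,bd\notin E(G)$: it deletes $ab,cd$ and adds $ac,bd$; $a,b,c,d$ are said to participate in it. A vertex is active in $G$ if it participates in some 2-switch on $G$; $G$ is active if all its vertices are active. For a split graph $(S,K,I)$ and distinct $u,v\in I$, $\sigma_{uv}(S)$ is the number of induced subgraphs of $S$ isomorphic to $P_4$ containing both $u$ and $v$. The factor graph $\Phi(S)$ is the loopless multigraph with vertex set $I$ having exactly $\sigma_{uv}(S)$ parallel edges between $u$ and $v$; it is simple if $\sigma_{uv}(S)\in\{0,1\}$ for all $u,v$. Graph notions (connected, complete, clique, clique number $\omega(\Phi)$, degree $\deg_\Phi$, etc.) applied to $\Phi(S)$ refer to its underlying simple graph, in which $u\sim v$ iff $\sigma_{uv}(S)\ge1$. *)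

theory Defs
  imports Main
begin

definition simple_graph :: "'a set \<Rightarrow> ('a \<Rightarrow> 'a \<Rightarrow> bool) \<Rightarrow> bool" where
  "simple_graph V E \<longleftrightarrow> finite V \<and> (\<forall>x y. E x y \<longrightarrow> x \<in> V \<and> y \<in> V)
     \<and> (\<forall>x y. E x y \<longrightarrow> E y x) \<and> (\<forall>x. \<not> E x x)"

definition split_graph :: "'a set \<Rightarrow> ('a \<Rightarrow> 'a \<Rightarrow> bool) \<Rightarrow> 'a set \<Rightarrow> 'a set \<Rightarrow> bool" where
  "split_graph V E K I \<longleftrightarrow> simple_graph V E \<and> K \<inter> I = {} \<and> K \<union> I = V
     \<and> (\<forall>x\<in>K. \<forall>y\<in>K. x \<noteq> y \<longrightarrow> E x y) \<and> (\<forall>x\<in>I. \<forall>y\<in>I. \<not> E x y)"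

definition two_switch :: "('a \<Rightarrow> 'a \<Rightarrow> bool) \<Rightarrow> 'a \<Rightarrow> 'a \<Rightarrow> 'a \<Rightarrow> 'a \<Rightarrow> bool" where
  "two_switch E a b c d \<longleftrightarrow> distinct [a, b, c, d] \<and> E a b \<and> E c d \<and> \<not> E a c \<and> \<not> E b d"

definition active_vertex :: "('a \<Rightarrow> 'a \<Rightarrow> bool) \<Rightarrow> 'a \<Rightarrow> bool" where
  "active_vertex E v \<longleftrightarrow> (\<exists>a b c d. two_switch E a b c d \<and> v \<in> {a, b, c, d})"

definition active_graph :: "'a set \<Rightarrow> ('a \<Rightarrow> 'a \<Rightarrow> bool) \<Rightarrow> bool" where
  "active_graph V E \<longleftrightarrow> (\<forall>v\<in>V. active_vertex E v)"

definition induced_P4 :: "'a set \<Rightarrow> ('a \<Rightarrow> 'a \<Rightarrow> bool) \<Rightarrow> 'a set \<Rightarrow> bool" where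
  "induced_P4 V E X \<longleftrightarrow> X \<subseteq> V \<and> (\<exists>a b c d. X = {a, b, c, d} \<and> distinct [a, b, c, d]
     \<and> E a b \<and> E b c \<and> E c d \<and> \<not> E a c \<and> \<not> E b d \<and> \<not> E a d)"

definition sigma :: "'a set \<Rightarrow> ('a \<Rightarrow> 'a \<Rightarrow> bool) \<Rightarrow> 'a \<Rightarrow> 'a \<Rightarrow> nat" where
  "sigma V E u v = card {X. induced_P4 V E X \<and> u \<in> X \<and> v \<in> X}"

text \<open>Underlying simple graph of the factor graph Phi(S) on vertex set I.\<close>
definition phi_adj :: "'a set \<Rightarrow> ('a \<Rightarrow> 'a \<Rightarrow> bool) \<Rightarrow> 'a set \<Rightarrow> 'a \<Rightarrow> 'a \<Rightarrow> bool" where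
  "phi_adj V E I u v \<longleftrightarrow> u \<in> I \<and> v \<in> I \<and> u \<noteq> v \<and> sigma V E u v \<ge> 1"

definition phi_simple :: "'a set \<Rightarrow> ('a \<Rightarrow> 'a \<Rightarrow> bool) \<Rightarrow> 'a set \<Rightarrow> bool" where
  "phi_simple V E I \<longleftrightarrow> (\<forall>u\<in>I. \<forall>v\<in>I. u \<noteq> v \<longrightarrow> sigma V E u v \<in> {0, 1})"

definition phi_connected :: "'a set \<Rightarrow> ('a \<Rightarrow> 'a \<Rightarrow> bool) \<Rightarrow> 'a set \<Rightarrow> bool" where
  "phi_connected V E I \<longleftrightarrow> (\<forall>u\<in>I. \<forall>v\<in>I. (phi_adj V E I)\<^sup>*\<^sup>* u v)"

definition phi_complete :: "'a set \<Rightarrow> ('a \<Rightarrow> 'a \<Rightarrow> bool) \<Rightarrow> 'a set \<Rightarrow> bool" where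
  "phi_complete V E I \<longleftrightarrow> (\<forall>u\<in>I. \<forall>v\<in>I. u \<noteq> v \<longrightarrow> phi_adj V E I u v)"

definition phi_clique :: "'a set \<Rightarrow> ('a \<Rightarrow> 'a \<Rightarrow> bool) \<Rightarrow> 'a set \<Rightarrow> 'a set \<Rightarrow> bool" where
  "phi_clique V E I C \<longleftrightarrow> C \<subseteq> I \<and> (\<forall>u\<in>C. \<forall>v\<in>C. u \<noteq> v \<longrightarrow> phi_adj V E I u v)"

definition phi_omega :: "'a set \<Rightarrow> ('a \<Rightarrow> 'a \<Rightarrow> bool) \<Rightarrow> 'a set \<Rightarrow> nat" where
  "phi_omega V E I = Max (card ` {C. phi_clique V E I C})"

definition phi_max_clique :: "'a set \<Rightarrow> ('a \<Rightarrow> 'a \<Rightarrow> bool) \<Rightarrow> 'a set \<Rightarrow> 'a set \<Rightarrow> bool" where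
  "phi_max_clique V E I C \<longleftrightarrow> phi_clique V E I C \<and> card C = phi_omega V E I"

definition phi_deg :: "'a set \<Rightarrow> ('a \<Rightarrow> 'a \<Rightarrow> bool) \<Rightarrow> 'a set \<Rightarrow> 'a \<Rightarrow> nat" where
  "phi_deg V E I v = card {w. phi_adj V E I v w}"

end

theory Submission
  imports Defs
begin

(* Write N(u) for the neighbourhood in K of u \<in> I. The induced P4s through u, v \<in> I are exactly
   the paths u-x-y-v with x \<in> N(u) - N(v) and y \<in> N(v) - N(u), so
   sigma_uv = |N(u) - N(v)| * |N(v) - N(u)|. Simplicity of Phi therefore makes the neighbourhoods of
   adjacent vertices differ by a single exchange, so they have equal size; by connectivity all N(u)
   have the same size, and then u ~ v iff N(u) \<noteq> N(v): Phi is complete multipartite with the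
   fibres of N as parts. Activity says every k \<in> K lies in some N(u) and misses some N(v). A family
   of sets pairwise differing by one exchange with these two properties consists either of all
   singletons or of all complements of singletons of K, so N takes exactly |K| values. Hence
   omega(Phi) = |K| \<le> |I|, every vertex lies in a transversal of the fibres (a maximum clique), and
   the alternative is |K| = |I| (N injective, Phi complete) versus |K| < |I|. *)

definition single_exchange :: "'a set set \<Rightarrow> bool" where
  "single_exchange F \<longleftrightarrow> (\<forall>S\<in>F. \<forall>T\<in>F. S \<noteq> T \<longrightarrow> (\<exists>x y. S - T = {x} \<and> T - S = {y}))"

lemma single_exchangeE:
  assumes "single_exchange F" "S \<in> F" "T \<in> F" "S \<noteq> T"
  obtains x y where "S - T = {x}" "T - S = {y}"
  using assms unfolding single_exchange_def by meson

lemma Diff_eq_singleton_iff: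
  "S - T = {x} \<longleftrightarrow> x \<in> S \<and> x \<notin> T \<and> (\<forall>z\<in>S. z \<notin> T \<longrightarrow> z = x)"
  by auto

lemma Diff_eq_singletons_imp_eq_insert:
  assumes "A - S = {x}" "S - A = {y}"
  shows "S = insert y (A - {x})"
  using assms by (auto simp: Diff_eq_singleton_iff)

(* A member not inside A \<union> B contains A \<inter> B, a member missing a point of A \<inter> B lies inside A \<union> B,
   and two such members would differ in two points. *)
lemma single_exchange_core_or_hull:
  assumes F: "single_exchange F" and A: "A \<in> F" and B: "B \<in> F" "A \<noteq> B"
  shows "(\<forall>S\<in>F. A \<inter> B \<subseteq> S) \<or> (\<forall>S\<in>F. S \<subseteq> A \<union> B)"
proof (rule ccontr)
  assume "\<not> ?thesis"
  then obtain S T c t where S: "S \<in> F" "c \<in> A" "c \<in> B" "c \<notin> S"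
    and T: "T \<in> F" "t \<in> T" "t \<notin> A" "t \<notin> B" by blast
  obtain a b where ab: "A - B = {a}" "B - A = {b}" using single_exchangeE[OF F A B] .
  have "A \<noteq> T" "T \<noteq> B" "A \<noteq> S" "B \<noteq> S" using S T by blast+
  obtain a1 where AT: "A - T = {a1}" using single_exchangeE[OF F A T(1) \<open>A \<noteq> T\<close>] .
  obtain t1 where TB: "T - B = {t1}" using single_exchangeE[OF F T(1) B(1) \<open>T \<noteq> B\<close>] .
  obtain b2 where BS: "B - S = {b2}" using single_exchangeE[OF F B(1) S(1) \<open>B \<noteq> S\<close>] .
  obtain s where SA: "S - A = {s}" using single_exchangeE[OF F A S(1) \<open>A \<noteq> S\<close>] .
  have "c \<in> T"
  proof (rule ccontr)
    assume "c \<notin> T"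
    then have "a \<in> T" using AT ab S unfolding Diff_eq_singleton_iff by blast
    then show False using TB ab T unfolding Diff_eq_singleton_iff by blast
  qed
  have "b \<in> S" using BS ab S unfolding Diff_eq_singleton_iff by blast
  then have "t \<notin> S" using SA ab T unfolding Diff_eq_singleton_iff by blast
  have "T \<noteq> S" using \<open>c \<in> T\<close> S by blast
  obtain z w where "T - S = {z}" "S - T = {w}" using single_exchangeE[OF F T(1) S(1) \<open>T \<noteq> S\<close>] .
  then show False using \<open>c \<in> T\<close> \<open>t \<notin> S\<close> S T unfolding Diff_eq_singleton_iff by blast
qed

lemma single_exchange_singletons_or_cosingletons:
  assumes F: "single_exchange F" and cover: "\<Union>F = K" and miss: "\<forall>k\<in>K. \<exists>S\<in>F. k \<notin> S"
    and "K \<noteq> {}"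
  shows "F = (\<lambda>k. {k}) ` K \<or> F = (\<lambda>k. K - {k}) ` K"
proof -
  obtain k where "k \<in> K" using \<open>K \<noteq> {}\<close> by blast
  then obtain A B where A: "A \<in> F" "k \<in> A" and B: "B \<in> F" "k \<notin> B" using cover miss by blast
  then have "A \<noteq> B" by blast
  obtain a b where ab: "A - B = {a}" "B - A = {b}" using single_exchangeE[OF F A(1) B(1) \<open>A \<noteq> B\<close>] .
  have exchange_with_A: "\<exists>x y. A - S = {x} \<and> S - A = {y}" if "S \<in> F" "S \<noteq> A" for S
    using single_exchangeE[OF F A(1) that(1)] that(2) by metis
  from single_exchange_core_or_hull[OF F A(1) B(1) \<open>A \<noteq> B\<close>] show ?thesis
  proof
    assume core: "\<forall>S\<in>F. A \<inter> B \<subseteq> S"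
    have "A \<inter> B = {}" using core miss cover A(1) by blast
    then have "A = {a}" using ab(1) by blast
    have "\<exists>x. S = {x}" if "S \<in> F" for S
    proof (cases "S = A")
      case False
      then obtain x y where "A - S = {x}" "S - A = {y}" using exchange_with_A \<open>S \<in> F\<close> by blast
      then have "S = insert y (A - {x})" "x \<in> A" by (auto simp: Diff_eq_singletons_imp_eq_insert)
      then have "S = {y}" using \<open>A = {a}\<close> by simp
      then show ?thesis ..
    qed (use \<open>A = {a}\<close> in blast)
    then have "F = (\<lambda>k. {k}) ` K" using cover by force
    then show ?thesis ..
  next
    assume hull: "\<forall>S\<in>F. S \<subseteq> A \<union> B"
    then have "K = insert b A" using cover A(1) B(1) ab(2) by blast
    moreover have "b \<notin> A" using ab(2) by blast
    ultimately have "\<exists>x\<in>K. S = K - {x}" if "S \<in> F" for S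
    proof (cases "S = A")
      case False
      then obtain x y where "A - S = {x}" "S - A = {y}" using exchange_with_A \<open>S \<in> F\<close> by blast
      then have S: "S = insert y (A - {x})" "x \<in> A" by (auto simp: Diff_eq_singletons_imp_eq_insert)
      then have "y = b" using hull \<open>S \<in> F\<close> \<open>S - A = {y}\<close> ab(2) by blast
      then have "S = K - {x}" using S \<open>K = insert b A\<close> \<open>b \<notin> A\<close> by blast
      then show ?thesis using \<open>A - S = {x}\<close> \<open>K = insert b A\<close> by blast
    qed (use \<open>K = insert b A\<close> \<open>b \<notin> A\<close> in auto)
    then have "F = (\<lambda>k. K - {k}) ` K" using miss by force
    then show ?thesis ..
  qed
qed

corollary card_single_exchange:
  assumes "single_exchange F" "\<Union>F = K" "\<forall>k\<in>K. \<exists>S\<in>F. k \<notin> S" "K \<noteq> {}"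
  shows "card F = card K"
proof -
  have "inj_on (\<lambda>k. {k}) K" "inj_on (\<lambda>k. K - {k}) K" by (auto simp: inj_on_def)
  then show ?thesis
    using single_exchange_singletons_or_cosingletons[OF assms] by (auto simp: card_image)
qed

lemma inj_on_transversal:
  assumes "v \<in> A"
  obtains C where "C \<subseteq> A" "v \<in> C" "inj_on f C" "f ` C = f ` A"
proof -
  define A' where "A' = {w\<in>A. f w \<noteq> f v}"
  obtain B where B: "B \<subseteq> A'" "inj_on f B" "f ` A' = f ` B"
    using subset_image_inj[of "f ` A'" f A', THEN iffD1, OF subset_refl] by (elim exE conjE)
  have "f ` insert v B = f ` A" using B(3) assms unfolding A'_def by auto
  moreover have "inj_on f (insert v B)" using B unfolding A'_def by auto
  ultimately show ?thesis using that[of "insert v B"] B(1) assms unfolding A'_def by blast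
qed

lemma two_switch_symmetries:
  assumes "symp E" "two_switch E a b c d"
  shows "two_switch E b a d c" "two_switch E c d a b"
  using assms unfolding two_switch_def by (auto dest: sympD)

lemma active_vertexE:
  assumes "symp E" "active_vertex E v"
  obtains b c d where "two_switch E v b c d"
proof -
  obtain a b c d where sw: "two_switch E a b c d" and "v \<in> {a, b, c, d}"
    using assms(2) unfolding active_vertex_def by blast
  note swaps = two_switch_symmetries[OF assms(1)]
  consider "v = a" | "v = b" | "v = c" | "v = d" using \<open>v \<in> {a, b, c, d}\<close> by blast
  then show thesis
  proof cases
    case 1
    then show ?thesis using that sw by blast
  next
    case 2
    then show ?thesis using that swaps(1)[OF sw] by blast
  next
    case 3
    then show ?thesis using that swaps(2)[OF sw] by blast
  next
    case 4
    then show ?thesis using that swaps(1)[OF swaps(2)[OF sw]] by blast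
  qed
qed

locale split_graph_KI =
  fixes V :: "'a set" and E :: "'a \<Rightarrow> 'a \<Rightarrow> bool" and K I :: "'a set"
  assumes split: "split_graph V E K I"
begin

lemma finite_V: "finite V"
  and K_Int_I: "K \<inter> I = {}"
  and K_Un_I: "K \<union> I = V"
  and edge_in_V: "E x y \<Longrightarrow> x \<in> V \<and> y \<in> V"
  and symp_E: "symp E"
  and K_clique: "x \<in> K \<Longrightarrow> y \<in> K \<Longrightarrow> x \<noteq> y \<Longrightarrow> E x y"
  and I_independent: "x \<in> I \<Longrightarrow> y \<in> I \<Longrightarrow> \<not> E x y"
  using split unfolding split_graph_def simple_graph_def symp_def by blast+

lemma finite_K: "finite K" and finite_I: "finite I"
  using finite_V K_Un_I by (auto intro: finite_subset)

lemma neighbour_of_I_in_K: "x \<in> I \<Longrightarrow> E x y \<Longrightarrow> y \<in> K"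
  using I_independent edge_in_V K_Un_I by blast

lemma non_neighbour_of_K_in_I: "x \<in> K \<Longrightarrow> y \<in> V \<Longrightarrow> y \<noteq> x \<Longrightarrow> \<not> E x y \<Longrightarrow> y \<in> I"
  using K_clique K_Un_I by blast

definition nbhd :: "'a \<Rightarrow> 'a set" where
  "nbhd u = {k\<in>K. E u k}"

lemma finite_nbhd: "finite (nbhd u)"
  using finite_K unfolding nbhd_def by simp

lemma induced_path_ends:
  assumes "distinct [a, b, c, d]" "{a, b, c, d} \<subseteq> V"
    and "E a b" "E b c" "E c d" "\<not> E a c" "\<not> E b d" "\<not> E a d"
  shows "a \<in> I" "b \<in> K" "c \<in> K" "d \<in> I"
proof -
  have end_in_I: "p \<in> I"
    if "distinct [p, r, s]" "{p, r, s} \<subseteq> V" "E r s" "\<not> E p r" "\<not> E p s" for p r s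
  proof (rule ccontr)
    assume "p \<notin> I"
    then have "p \<in> K" using that(2) K_Un_I by blast
    then have "r \<in> I" "s \<in> I" using that non_neighbour_of_K_in_I by auto
    then show False using that(3) I_independent by blast
  qed
  show "a \<in> I" using end_in_I[of a c d] assms by auto
  show "d \<in> I" using end_in_I[of d b a] assms symp_E by (auto dest: sympD)
  show "b \<in> K" using neighbour_of_I_in_K \<open>a \<in> I\<close> assms(3) .
  show "c \<in> K" using neighbour_of_I_in_K \<open>d \<in> I\<close> assms(5) symp_E by (blast dest: sympD)
qed

lemma induced_P4_through_I:
  assumes P4: "induced_P4 V E X" and uv: "u \<in> X" "v \<in> X" "u \<in> I" "v \<in> I" "u \<noteq> v"
  shows "\<exists>x y. X = {u, x, y, v} \<and> x \<in> nbhd u - nbhd v \<and> y \<in> nbhd v - nbhd u"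
proof -
  obtain a b c d where X: "X = {a, b, c, d}" "X \<subseteq> V" and path: "distinct [a, b, c, d]"
    "E a b" "E b c" "E c d" "\<not> E a c" "\<not> E b d" "\<not> E a d"
    using P4 unfolding induced_P4_def by blast
  note ends = induced_path_ends[OF path(1) X(2)[unfolded X(1)] path(2-)]
  then have "u = a \<and> v = d \<or> u = d \<and> v = a" using uv X(1) K_Int_I by blast
  moreover have "b \<in> nbhd a - nbhd d" "c \<in> nbhd d - nbhd a"
    using ends path symp_E unfolding nbhd_def by (auto dest: sympD)
  ultimately show ?thesis using X(1) by blast
qed

lemma induced_P4_of_private_neighbours:
  assumes "u \<in> I" "v \<in> I" "x \<in> nbhd u - nbhd v" "y \<in> nbhd v - nbhd u"
  shows "induced_P4 V E {u, x, y, v}"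
proof -
  have "x \<in> K" "y \<in> K" using assms(3,4) unfolding nbhd_def by auto
  then have "distinct [u, x, y, v]" using assms K_Int_I by (auto simp: nbhd_def)
  moreover have "E u x" "E x y" "E y v" "\<not> E u y" "\<not> E x v" "\<not> E u v"
    using assms \<open>x \<in> K\<close> \<open>y \<in> K\<close> \<open>distinct [u, x, y, v]\<close> K_clique I_independent symp_E
    unfolding nbhd_def by (auto dest: sympD)
  moreover have "{u, x, y, v} \<subseteq> V" using assms \<open>x \<in> K\<close> \<open>y \<in> K\<close> K_Un_I by auto
  ultimately show ?thesis unfolding induced_P4_def by blast
qed

lemma sigma_eq_card_mult_card:
  assumes "u \<in> I" "v \<in> I" "u \<noteq> v"
  shows "sigma V E u v = card (nbhd u - nbhd v) * card (nbhd v - nbhd u)"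
proof -
  let ?P4 = "\<lambda>(x, y). {u, x, y, v}"
  have "{X. induced_P4 V E X \<and> u \<in> X \<and> v \<in> X}
      = ?P4 ` ((nbhd u - nbhd v) \<times> (nbhd v - nbhd u))"
    using induced_P4_through_I[OF _ _ _ assms] induced_P4_of_private_neighbours[OF assms(1,2)]
    by fastforce
  moreover have "inj_on ?P4 ((nbhd u - nbhd v) \<times> (nbhd v - nbhd u))"
    using assms K_Int_I unfolding inj_on_def nbhd_def by auto
  ultimately show ?thesis
    unfolding sigma_def by (simp add: card_image card_cartesian_product)
qed

lemma phi_adj_iff_incomparable:
  assumes "u \<in> I" "v \<in> I"
  shows "phi_adj V E I u v \<longleftrightarrow> \<not> nbhd u \<subseteq> nbhd v \<and> \<not> nbhd v \<subseteq> nbhd u"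
proof (cases "u = v")
  case False
  then show ?thesis
    using assms finite_nbhd
    by (auto simp: phi_adj_def sigma_eq_card_mult_card Suc_le_eq card_gt_0_iff)
qed (simp add: phi_adj_def)

lemma card_nbhd_Diff_eq_1:
  assumes "phi_simple V E I" "phi_adj V E I u v"
  shows "card (nbhd u - nbhd v) = 1" "card (nbhd v - nbhd u) = 1"
proof -
  have "u \<in> I" "v \<in> I" "u \<noteq> v" "1 \<le> sigma V E u v" using assms(2) unfolding phi_adj_def by auto
  moreover have "sigma V E u v \<in> {0, 1}" using assms(1) calculation unfolding phi_simple_def by blast
  ultimately have "card (nbhd u - nbhd v) * card (nbhd v - nbhd u) = 1"
    using sigma_eq_card_mult_card by simp
  then show "card (nbhd u - nbhd v) = 1" "card (nbhd v - nbhd u) = 1" by simp_all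
qed

lemma phi_adj_card_nbhd_eq:
  assumes "phi_simple V E I" "phi_adj V E I u v"
  shows "card (nbhd u) = card (nbhd v)"
proof -
  have "card (nbhd u) - card (nbhd u \<inter> nbhd v) = 1" "card (nbhd v) - card (nbhd v \<inter> nbhd u) = 1"
    using card_nbhd_Diff_eq_1[OF assms] finite_nbhd by (simp_all add: card_Diff_subset_Int)
  then show ?thesis by (simp add: Int_commute)
qed

lemma active_K_vertex:
  assumes "active_graph V E" "k \<in> K"
  shows "\<exists>u\<in>I. k \<in> nbhd u" "\<exists>v\<in>I. k \<notin> nbhd v"
proof -
  have "active_vertex E k" using assms K_Un_I unfolding active_graph_def by blast
  then obtain b c d where "two_switch E k b c d" using active_vertexE[OF symp_E] by blast
  then have sw: "distinct [k, b, c, d]" "E k b" "E c d" "\<not> E k c" "\<not> E b d"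
    unfolding two_switch_def by auto
  have "c \<in> I" using non_neighbour_of_K_in_I[OF assms(2)] sw edge_in_V by auto
  then have "d \<in> K" using neighbour_of_I_in_K sw(3) by blast
  moreover have "\<not> E d b" using sw(5) symp_E by (blast dest: sympD)
  ultimately have "b \<in> I" using non_neighbour_of_K_in_I edge_in_V[OF sw(2)] sw(1) by auto
  show "\<exists>u\<in>I. k \<in> nbhd u"
    using \<open>b \<in> I\<close> sw(2) symp_E assms(2) unfolding nbhd_def by (auto dest: sympD)
  show "\<exists>v\<in>I. k \<notin> nbhd v"
    using \<open>c \<in> I\<close> sw(4) symp_E unfolding nbhd_def by (auto dest: sympD)
qed

lemma active_K_empty_imp_I_empty:
  assumes "active_graph V E" "K = {}"
  shows "I = {}"
proof (rule ccontr)
  assume "I \<noteq> {}"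
  then obtain v where "v \<in> I" by blast
  then have "active_vertex E v" using assms(1) K_Un_I unfolding active_graph_def by blast
  then obtain b c d where "two_switch E v b c d" using active_vertexE[OF symp_E] by blast
  then have "b \<in> K" using neighbour_of_I_in_K \<open>v \<in> I\<close> unfolding two_switch_def by blast
  then show False using assms(2) by blast
qed

context
  assumes simple: "phi_simple V E I" and connected: "phi_connected V E I"
begin

lemma card_nbhd_eq:
  assumes "u \<in> I" "v \<in> I"
  shows "card (nbhd u) = card (nbhd v)"
proof -
  have "(phi_adj V E I)\<^sup>*\<^sup>* u v" using connected assms unfolding phi_connected_def by blast
  then show ?thesis
    by (induction rule: rtranclp_induct) (auto dest: phi_adj_card_nbhd_eq[OF simple])
qed

lemma phi_adj_iff_nbhd_neq:
  assumes "u \<in> I" "v \<in> I"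
  shows "phi_adj V E I u v \<longleftrightarrow> nbhd u \<noteq> nbhd v"
proof -
  have "nbhd u \<subseteq> nbhd v \<longleftrightarrow> nbhd u = nbhd v" "nbhd v \<subseteq> nbhd u \<longleftrightarrow> nbhd u = nbhd v"
    using card_subset_eq[OF finite_nbhd] card_nbhd_eq[OF assms] by (metis order_refl)+
  then show ?thesis using phi_adj_iff_incomparable[OF assms] by blast
qed

lemma single_exchange_nbhds: "single_exchange (nbhd ` I)"
  unfolding single_exchange_def
proof (intro ballI impI)
  fix S T assume "S \<in> nbhd ` I" "T \<in> nbhd ` I" "S \<noteq> T"
  then obtain u v where "u \<in> I" "v \<in> I" "S = nbhd u" "T = nbhd v" by blast
  then have "phi_adj V E I u v" using phi_adj_iff_nbhd_neq \<open>S \<noteq> T\<close> by blast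
  then show "\<exists>x y. S - T = {x} \<and> T - S = {y}"
    using card_nbhd_Diff_eq_1[OF simple] \<open>S = nbhd u\<close> \<open>T = nbhd v\<close> by (metis card_1_singletonE)
qed

lemma phi_clique_iff: "phi_clique V E I C \<longleftrightarrow> C \<subseteq> I \<and> inj_on nbhd C"
  unfolding phi_clique_def inj_on_def using phi_adj_iff_nbhd_neq by blast

lemma phi_complete_iff: "phi_complete V E I \<longleftrightarrow> inj_on nbhd I"
  unfolding phi_complete_def inj_on_def using phi_adj_iff_nbhd_neq by blast

lemma card_phi_clique_le: "phi_clique V E I C \<Longrightarrow> card C \<le> card (nbhd ` I)"
  unfolding phi_clique_iff by (metis card_image card_mono finite_I finite_imageI image_mono)

lemma phi_clique_through:
  assumes "v \<in> I"
  obtains C where "phi_clique V E I C" "v \<in> C" "card C = card (nbhd ` I)"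
proof -
  obtain C where "C \<subseteq> I" "v \<in> C" "inj_on nbhd C" "nbhd ` C = nbhd ` I"
    using inj_on_transversal[OF assms] .
  moreover have "card C = card (nbhd ` I)"
    using card_image[OF \<open>inj_on nbhd C\<close>] \<open>nbhd ` C = nbhd ` I\<close> by simp
  ultimately show thesis using that phi_clique_iff by blast
qed

lemma phi_omega_eq: "phi_omega V E I = card (nbhd ` I)"
proof (cases "I = {}")
  case True
  then have "{C. phi_clique V E I C} = {{}}" unfolding phi_clique_def by auto
  then show ?thesis unfolding phi_omega_def using True by simp
next
  case False
  then obtain v C where "v \<in> I" "phi_clique V E I C" "card C = card (nbhd ` I)"
    using phi_clique_through by blast
  then have "card (nbhd ` I) \<in> card ` {C. phi_clique V E I C}" by force
  moreover have "finite {C. phi_clique V E I C}"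
    using finite_I unfolding phi_clique_def by (simp add: finite_subset[of _ "Pow I"] subset_eq)
  ultimately show ?thesis
    unfolding phi_omega_def using card_phi_clique_le by (intro Max_eqI) auto
qed

lemma phi_max_clique_through: "v \<in> I \<Longrightarrow> \<exists>C. phi_max_clique V E I C \<and> v \<in> C"
  using phi_clique_through unfolding phi_max_clique_def phi_omega_eq by metis

lemma card_nbhds_le_Suc_phi_deg:
  assumes "v \<in> I"
  shows "card (nbhd ` I) \<le> Suc (phi_deg V E I v)"
proof -
  obtain C where C: "phi_clique V E I C" "v \<in> C" "card C = card (nbhd ` I)"
    using phi_clique_through[OF assms] .
  have "C - {v} \<subseteq> {w. phi_adj V E I v w}" using C(1,2) by (auto simp: phi_clique_def)
  moreover have "finite {w. phi_adj V E I v w}"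
    using finite_I unfolding phi_adj_def by (simp add: finite_subset[of _ I] subset_eq)
  ultimately have "card (C - {v}) \<le> phi_deg V E I v" unfolding phi_deg_def by (rule card_mono[rotated])
  then show ?thesis using C(2,3) by simp
qed

lemma card_nbhds_eq_card_K:
  assumes "active_graph V E" "K \<noteq> {}"
  shows "card (nbhd ` I) = card K"
proof (rule card_single_exchange[OF single_exchange_nbhds])
  show "\<Union> (nbhd ` I) = K" using active_K_vertex(1)[OF assms(1)] unfolding nbhd_def by blast
  show "\<forall>k\<in>K. \<exists>S\<in>nbhd ` I. k \<notin> S" using active_K_vertex(2)[OF assms(1)] by blast
qed fact

end

end

theorem theorem5p2:
  fixes V :: "'a set" and E :: "'a \<Rightarrow> 'a \<Rightarrow> bool" and K I :: "'a set"
  assumes "split_graph V E K I"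
    and "active_graph V E"
    and "phi_simple V E I"
    and "phi_connected V E I"
  shows "let c1 = (phi_complete V E I \<and> card K = card I);
             c2 = (card K = phi_omega V E I \<and> phi_omega V E I < card I
                   \<and> (\<forall>v\<in>I. \<exists>C. phi_max_clique V E I C \<and> v \<in> C)
                   \<and> card K \<le> 1 + Min (phi_deg V E I ` I))
         in (c1 \<and> \<not> c2) \<or> (\<not> c1 \<and> c2)"
proof -
  interpret split_graph_KI V E K I by (rule split_graph_KI.intro) fact
  show ?thesis
  proof (cases "K = {}")
    case True
    then have "I = {}" using active_K_empty_imp_I_empty assms(2) by blast
    then show ?thesis using True by (simp add: Let_def phi_complete_def)
  next
    case False
    note simple_connected = assms(3,4)
    have card_K: "card (nbhd ` I) = card K"
      using card_nbhds_eq_card_K[OF simple_connected assms(2) False] .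
    then have "card K \<le> card I" using card_image_le[OF finite_I] by metis
    have "I \<noteq> {}" using card_K False finite_K by auto
    have "phi_complete V E I \<longleftrightarrow> card K = card I"
      using phi_complete_iff[OF simple_connected] inj_on_iff_eq_card[OF finite_I, of nbhd] card_K by simp
    moreover have "phi_omega V E I = card K" using phi_omega_eq[OF simple_connected] card_K by simp
    moreover have "card K \<le> 1 + Min (phi_deg V E I ` I)"
      using Min_in[of "phi_deg V E I ` I"] finite_I \<open>I \<noteq> {}\<close> card_K
        card_nbhds_le_Suc_phi_deg[OF simple_connected] by fastforce
    ultimately show ?thesis
      using \<open>card K \<le> card I\<close> phi_max_clique_through[OF simple_connected] by (auto simp: Let_def)
  qed
qed

end
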